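(* Let $S\in\mathbb{S}^d_m$, $G\in\mathcal{M}(S)$ and $y\in\mathbb{R}^d$ with $P_G(y)\ne\emptyset$. Then $P_G(y)$ is a convex set if and only if $S(u-v,u-v)=0$ for all $u,v\in P_G(y)$. Consequently, $\Sigma_0(P_G)=\{y\in\Sigma(P_G): P_G(y)\text{ is convex}\}$.
   Context: $\mathbb{S}^d_m$: symmetric invertible $d\times d$ real matrices with exactly $m$ positive eigenvalues; $S(x,y):=\langle x,Sy\rangle$. $G\subset\mathbb{R}^d$ is $S$-monotone if $S(x-y,x-y)\ge0$ for $x,y\in G$; maximal if not a strict subset of another $S$-monotone set; $\mathcal{M}(S)$ is the family of maximal $S$-monotone sets. $P_G(y):=\operatorname{argmax}_{x\in G}(S(x,y)-\frac12S(x,x))$. $\Sigma(P_G):=\{y:P_G(y)\ne\emptyset\text{ and is not a single point}\}$; $\Sigma_0(P_G):=\{y\in\Sigma(P_G):S(y_1-y_2,y_1-y_2)=0\text{ for all }y_1,y_2\in P_G(y)\}$. *)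

theory Defs
  imports "Jordan_Normal_Form.Char_Poly"
begin

definition num_pos_eigenvalues :: "real mat \<Rightarrow> nat" where
  "num_pos_eigenvalues S =
     (\<Sum>e\<in>{e::real. e > 0 \<and> poly (char_poly S) e = 0}. order e (char_poly S))"

definition Sdm :: "nat \<Rightarrow> nat \<Rightarrow> real mat set" where
  "Sdm d m = {S. S \<in> carrier_mat d d \<and> transpose_mat S = S \<and> invertible_mat S
                \<and> num_pos_eigenvalues S = m}"

definition Sform :: "real mat \<Rightarrow> real vec \<Rightarrow> real vec \<Rightarrow> real" where
  "Sform S x y = scalar_prod x (S *\<^sub>v y)"

definition S_monotone :: "nat \<Rightarrow> real mat \<Rightarrow> real vec set \<Rightarrow> bool" where
  "S_monotone d S G \<longleftrightarrow> G \<subseteq> carrier_vec d \<and>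
     (\<forall>x\<in>G. \<forall>y\<in>G. Sform S (x - y) (x - y) \<ge> 0)"

definition max_S_monotone :: "nat \<Rightarrow> real mat \<Rightarrow> real vec set set" where
  "max_S_monotone d S = {G. S_monotone d S G \<and>
     (\<forall>H. S_monotone d S H \<and> G \<subseteq> H \<longrightarrow> H = G)}"

definition P_G :: "real mat \<Rightarrow> real vec set \<Rightarrow> real vec \<Rightarrow> real vec set" where
  "P_G S G y = {x \<in> G. \<forall>z\<in>G.
      Sform S z y - Sform S z z / 2 \<le> Sform S x y - Sform S x x / 2}"

definition Sigma_P :: "nat \<Rightarrow> real mat \<Rightarrow> real vec set \<Rightarrow> real vec set" where
  "Sigma_P d S G = {y \<in> carrier_vec d. P_G S G y \<noteq> {} \<and> \<not> (\<exists>x. P_G S G y = {x})}"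

definition Sigma0_P :: "nat \<Rightarrow> real mat \<Rightarrow> real vec set \<Rightarrow> real vec set" where
  "Sigma0_P d S G = {y \<in> Sigma_P d S G.
      \<forall>y1\<in>P_G S G y. \<forall>y2\<in>P_G S G y. Sform S (y1 - y2) (y1 - y2) = 0}"

definition convex_vec :: "real vec set \<Rightarrow> bool" where
  "convex_vec A \<longleftrightarrow> (\<forall>u\<in>A. \<forall>v\<in>A. \<forall>t::real. 0 \<le> t \<and> t \<le> 1 \<longrightarrow>
      t \<cdot>\<^sub>v u + (1 - t) \<cdot>\<^sub>v v \<in> A)"

end

theory Submission
  imports Defs
begin

text \<open>The objective \<open>x \<mapsto> S(x,y) - S(x,x)/2\<close> satisfies
  \<open>f(tu + (1-t)v) = t f(u) + (1-t) f(v) + t(1-t) S(u-v,u-v)/2\<close>, so two maximisers \<open>u, v\<close>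
  can only have maximising convex combinations if \<open>S(u-v,u-v) \<le> 0\<close>; monotonicity forces
  equality. Conversely, if \<open>S(u-v,u-v) = 0\<close> then \<open>w = tu + (1-t)v\<close> satisfies
  \<open>S(w-z,w-z) = t S(u-z,u-z) + (1-t) S(v-z,v-z) \<ge> 0\<close> for every \<open>z \<in> G\<close>, so maximality
  puts \<open>w\<close> into \<open>G\<close>, and the identity for \<open>f\<close> makes \<open>w\<close> a maximiser.\<close>

lemma Sform_add_left:
  "S \<in> carrier_mat d d \<Longrightarrow> a \<in> carrier_vec d \<Longrightarrow> b \<in> carrier_vec d \<Longrightarrow> c \<in> carrier_vec d
   \<Longrightarrow> Sform S (a + b) c = Sform S a c + Sform S b c"
  unfolding Sform_def by (rule add_scalar_prod_distrib[of _ d]) auto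

lemma Sform_diff_left:
  "S \<in> carrier_mat d d \<Longrightarrow> a \<in> carrier_vec d \<Longrightarrow> b \<in> carrier_vec d \<Longrightarrow> c \<in> carrier_vec d
   \<Longrightarrow> Sform S (a - b) c = Sform S a c - Sform S b c"
  unfolding Sform_def by (rule minus_scalar_prod_distrib[of _ d]) auto

lemma Sform_smult_left:
  "S \<in> carrier_mat d d \<Longrightarrow> a \<in> carrier_vec d \<Longrightarrow> c \<in> carrier_vec d
   \<Longrightarrow> Sform S (k \<cdot>\<^sub>v a) c = k * Sform S a c"
  unfolding Sform_def by (rule smult_scalar_prod_distrib[of _ d]) auto

lemma Sform_add_right:
  "S \<in> carrier_mat d d \<Longrightarrow> a \<in> carrier_vec d \<Longrightarrow> b \<in> carrier_vec d \<Longrightarrow> c \<in> carrier_vec d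
   \<Longrightarrow> Sform S c (a + b) = Sform S c a + Sform S c b"
  unfolding Sform_def by (simp add: mult_add_distrib_mat_vec scalar_prod_add_distrib[of _ d])

lemma Sform_diff_right:
  "S \<in> carrier_mat d d \<Longrightarrow> a \<in> carrier_vec d \<Longrightarrow> b \<in> carrier_vec d \<Longrightarrow> c \<in> carrier_vec d
   \<Longrightarrow> Sform S c (a - b) = Sform S c a - Sform S c b"
  unfolding Sform_def by (simp add: mult_minus_distrib_mat_vec scalar_prod_minus_distrib[of _ d])

lemma Sform_smult_right:
  "S \<in> carrier_mat d d \<Longrightarrow> a \<in> carrier_vec d \<Longrightarrow> c \<in> carrier_vec d
   \<Longrightarrow> Sform S c (k \<cdot>\<^sub>v a) = k * Sform S c a"
  unfolding Sform_def by (simp add: mult_mat_vec[of _ d d] scalar_prod_smult_distrib[of _ d])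

lemmas Sform_bilinear =
  Sform_add_left Sform_diff_left Sform_smult_left
  Sform_add_right Sform_diff_right Sform_smult_right

lemma Sform_commute:
  "S \<in> carrier_mat d d \<Longrightarrow> transpose_mat S = S \<Longrightarrow> a \<in> carrier_vec d \<Longrightarrow> c \<in> carrier_vec d
   \<Longrightarrow> Sform S a c = Sform S c a"
  unfolding Sform_def
  by (metis comm_scalar_prod mult_mat_vec_carrier transpose_vec_mult_scalar)

lemma Sform_diff_commute:
  assumes "S \<in> carrier_mat d d" "transpose_mat S = S" "a \<in> carrier_vec d" "b \<in> carrier_vec d"
  shows "Sform S (a - b) (a - b) = Sform S (b - a) (b - a)"
  using assms Sform_commute[OF assms(1,2,3,4)]
  by (simp add: Sform_bilinear[of S d] algebra_simps)

lemma Sform_diff_self: "S \<in> carrier_mat d d \<Longrightarrow> a \<in> carrier_vec d \<Longrightarrow> Sform S (a - a) (a - a) = 0"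
  unfolding Sform_def by (simp add: scalar_prod_left_zero[of _ d])

lemma Sform_convex_comb_diff:
  assumes S: "S \<in> carrier_mat d d" "transpose_mat S = S"
    and vecs: "u \<in> carrier_vec d" "v \<in> carrier_vec d" "z \<in> carrier_vec d"
  shows "Sform S (t \<cdot>\<^sub>v u + (1 - t) \<cdot>\<^sub>v v - z) (t \<cdot>\<^sub>v u + (1 - t) \<cdot>\<^sub>v v - z)
     = t * Sform S (u - z) (u - z) + (1 - t) * Sform S (v - z) (v - z)
       - t * (1 - t) * Sform S (u - v) (u - v)"
proof -
  have "Sform S v u = Sform S u v" "Sform S z u = Sform S u z" "Sform S z v = Sform S v z"
    using Sform_commute[OF S] vecs by auto
  then show ?thesis
    using vecs S(1) by (simp add: Sform_bilinear[of S d] algebra_simps)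
qed

definition P_G_objective :: "real mat \<Rightarrow> real vec \<Rightarrow> real vec \<Rightarrow> real" where
  "P_G_objective S y x = Sform S x y - Sform S x x / 2"

lemma P_G_eq:
  "P_G S G y = {x \<in> G. \<forall>z\<in>G. P_G_objective S y z \<le> P_G_objective S y x}"
  unfolding P_G_def P_G_objective_def ..

lemma P_G_objective_convex_comb:
  assumes S: "S \<in> carrier_mat d d" "transpose_mat S = S"
    and vecs: "u \<in> carrier_vec d" "v \<in> carrier_vec d" "y \<in> carrier_vec d"
  shows "P_G_objective S y (t \<cdot>\<^sub>v u + (1 - t) \<cdot>\<^sub>v v)
     = t * P_G_objective S y u + (1 - t) * P_G_objective S y v
       + t * (1 - t) * Sform S (u - v) (u - v) / 2"
proof -
  have "Sform S v u = Sform S u v"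
    using Sform_commute[OF S] vecs by auto
  then show ?thesis
    unfolding P_G_objective_def using vecs S(1)
    by (simp add: Sform_bilinear[of S d] algebra_simps) (simp add: field_simps)
qed

lemma S_monotone_insert:
  assumes S: "S \<in> carrier_mat d d" "transpose_mat S = S"
    and G: "S_monotone d S G" and w: "w \<in> carrier_vec d"
    and w_G: "\<And>z. z \<in> G \<Longrightarrow> Sform S (w - z) (w - z) \<ge> 0"
  shows "S_monotone d S (insert w G)"
  unfolding S_monotone_def
proof (intro conjI ballI)
  show "insert w G \<subseteq> carrier_vec d"
    using G w unfolding S_monotone_def by auto
next
  fix a b assume a: "a \<in> insert w G" and b: "b \<in> insert w G"
  have G_vecs: "G \<subseteq> carrier_vec d"
    using G unfolding S_monotone_def by auto
  consider "a = w" "b = w" | "a = w" "b \<in> G" | "a \<in> G" "b = w" | "a \<in> G" "b \<in> G"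
    using a b by auto
  then show "Sform S (a - b) (a - b) \<ge> 0"
  proof cases
    case 1
    then show ?thesis using Sform_diff_self[OF S(1) w] by simp
  next
    case 2
    then show ?thesis using w_G by simp
  next
    case 3
    then show ?thesis using w_G[of a] Sform_diff_commute[OF S w, of a] G_vecs by auto
  next
    case 4
    then show ?thesis using G unfolding S_monotone_def by auto
  qed
qed

lemma max_S_monotone_convex_comb_mem:
  assumes S: "S \<in> carrier_mat d d" "transpose_mat S = S"
    and G: "G \<in> max_S_monotone d S"
    and uv: "u \<in> G" "v \<in> G" "Sform S (u - v) (u - v) = 0"
    and t: "0 \<le> t" "t \<le> 1"
  shows "t \<cdot>\<^sub>v u + (1 - t) \<cdot>\<^sub>v v \<in> G"
proof -
  define w where "w = t \<cdot>\<^sub>v u + (1 - t) \<cdot>\<^sub>v v"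
  have mono: "S_monotone d S G" and max: "\<And>H. S_monotone d S H \<Longrightarrow> G \<subseteq> H \<Longrightarrow> H = G"
    using G unfolding max_S_monotone_def by auto
  have G_vecs: "G \<subseteq> carrier_vec d" and G_nonneg: "\<And>a b. a \<in> G \<Longrightarrow> b \<in> G \<Longrightarrow> Sform S (a - b) (a - b) \<ge> 0"
    using mono unfolding S_monotone_def by auto
  have uv_vecs: "u \<in> carrier_vec d" "v \<in> carrier_vec d"
    using uv G_vecs by auto
  then have w: "w \<in> carrier_vec d"
    unfolding w_def by auto
  have "Sform S (w - z) (w - z) \<ge> 0" if z: "z \<in> G" for z
  proof -
    have "Sform S (w - z) (w - z) = t * Sform S (u - z) (u - z) + (1 - t) * Sform S (v - z) (v - z)"
      unfolding w_def using Sform_convex_comb_diff[OF S uv_vecs, of z t] uv(3) z G_vecs by auto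
    then show ?thesis
      using G_nonneg[OF uv(1) z] G_nonneg[OF uv(2) z] t by simp
  qed
  then have "insert w G = G"
    using max S_monotone_insert[OF S mono w] by blast
  then show ?thesis
    unfolding w_def by blast
qed

lemma S_null_if_convex_P_G:
  assumes S: "S \<in> carrier_mat d d" "transpose_mat S = S"
    and G: "S_monotone d S G" and y: "y \<in> carrier_vec d"
    and convex: "convex_vec (P_G S G y)"
    and uv: "u \<in> P_G S G y" "v \<in> P_G S G y"
  shows "Sform S (u - v) (u - v) = 0"
proof -
  let ?f = "P_G_objective S y"
  let ?w = "(1/2::real) \<cdot>\<^sub>v u + (1 - 1/2) \<cdot>\<^sub>v v"
  have "?w \<in> P_G S G y"
    by (rule convex[unfolded convex_vec_def, rule_format]) (use uv in auto)
  then have "?f ?w \<le> ?f u" "?f v \<le> ?f u" "?f u \<le> ?f v"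
    using uv unfolding P_G_eq by auto
  moreover have "u \<in> G" "v \<in> G"
    using uv unfolding P_G_eq by auto
  then have "u \<in> carrier_vec d" "v \<in> carrier_vec d" "Sform S (u - v) (u - v) \<ge> 0"
    using G unfolding S_monotone_def by auto
  moreover from this have "?f ?w = ?f u / 2 + ?f v / 2 + Sform S (u - v) (u - v) / 8"
    using P_G_objective_convex_comb[OF S _ _ y, of u v "1/2"] by simp
  ultimately show ?thesis by linarith
qed

lemma convex_P_G_if_S_null:
  assumes S: "S \<in> carrier_mat d d" "transpose_mat S = S"
    and G: "G \<in> max_S_monotone d S" and y: "y \<in> carrier_vec d"
    and null: "\<forall>u\<in>P_G S G y. \<forall>v\<in>P_G S G y. Sform S (u - v) (u - v) = 0"
  shows "convex_vec (P_G S G y)"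
  unfolding convex_vec_def
proof (intro ballI allI impI)
  fix u v and t :: real
  assume u: "u \<in> P_G S G y" and v: "v \<in> P_G S G y" and t: "0 \<le> t \<and> t \<le> 1"
  let ?f = "P_G_objective S y"
  let ?w = "t \<cdot>\<^sub>v u + (1 - t) \<cdot>\<^sub>v v"
  have uv_G: "u \<in> G" "v \<in> G" and uv_max: "\<forall>z\<in>G. ?f z \<le> ?f u" "\<forall>z\<in>G. ?f z \<le> ?f v"
    using u v unfolding P_G_eq by auto
  have uv_null: "Sform S (u - v) (u - v) = 0"
    using null u v by blast
  have "u \<in> carrier_vec d" "v \<in> carrier_vec d"
    using uv_G G unfolding max_S_monotone_def S_monotone_def by auto
  then have f_w: "?f ?w = t * ?f u + (1 - t) * ?f v"
    using P_G_objective_convex_comb[OF S _ _ y, of u v t] uv_null by simp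
  have "?f z \<le> ?f ?w" if "z \<in> G" for z
  proof -
    have "t * ?f z \<le> t * ?f u" "(1 - t) * ?f z \<le> (1 - t) * ?f v"
      using uv_max that t by (auto intro: mult_left_mono)
    then show ?thesis
      using f_w by (simp add: algebra_simps)
  qed
  moreover have "?w \<in> G"
    using max_S_monotone_convex_comb_mem[OF S G uv_G uv_null] t by auto
  ultimately show "?w \<in> P_G S G y"
    unfolding P_G_eq by blast
qed

lemma convex_P_G_iff_S_null:
  assumes S: "S \<in> carrier_mat d d" "transpose_mat S = S"
    and G: "G \<in> max_S_monotone d S" and y: "y \<in> carrier_vec d"
  shows "convex_vec (P_G S G y) \<longleftrightarrow>
           (\<forall>u\<in>P_G S G y. \<forall>v\<in>P_G S G y. Sform S (u - v) (u - v) = 0)"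
  using S_null_if_convex_P_G[OF S _ y] convex_P_G_if_S_null[OF S G y] G
  unfolding max_S_monotone_def by blast

theorem lemma3:
  fixes d m :: nat and S :: "real mat" and G :: "real vec set" and y :: "real vec"
  assumes "S \<in> Sdm d m"
    and "G \<in> max_S_monotone d S"
    and "y \<in> carrier_vec d"
    and "P_G S G y \<noteq> {}"
  shows "(convex_vec (P_G S G y) \<longleftrightarrow>
           (\<forall>u\<in>P_G S G y. \<forall>v\<in>P_G S G y. Sform S (u - v) (u - v) = 0))
         \<and> Sigma0_P d S G = {y' \<in> Sigma_P d S G. convex_vec (P_G S G y')}"
proof -
  have S: "S \<in> carrier_mat d d" "transpose_mat S = S"
    using assms(1) unfolding Sdm_def by auto
  have "Sigma0_P d S G = {y' \<in> Sigma_P d S G. convex_vec (P_G S G y')}"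
    using convex_P_G_iff_S_null[OF S assms(2)] unfolding Sigma0_P_def Sigma_P_def by auto
  with convex_P_G_iff_S_null[OF S assms(2,3)] show ?thesis
    by simp
qed

end
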